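(* Let $\zeta\in\mathbb{R}$ satisfy either $0<\zeta<\min\left\{\gamma^A_{\min},\dfrac{\gamma^S_{\min}}{\gamma^A_{\max}+\gamma^S_{\min}}\right\}$ or $\zeta\ge\gamma^A_{\max}+\gamma^S_{\max}$. Then the symmetric matrix $Z(\zeta)=(1-\zeta)R(\zeta I-\tilde A)^{-1}R^T+\zeta I$ is well defined and is either positive definite or negative definite.
   Context: $A\in\mathbb{R}^{n\times n}$ is symmetric positive definite, $B\in\mathbb{R}^{m\times n}$ has full row rank. $\widehat A\in\mathbb{R}^{n\times n}$, $\widehat S\in\mathbb{R}^{m\times m}$ are symmetric positive definite; $\tilde A=\widehat A^{-1/2}A\widehat A^{-1/2}$, $R=\widehat S^{-1/2}B\widehat A^{-1/2}$, $\tilde S=B\widehat A^{-1}B^T$. $\gamma^A_{\min},\gamma^A_{\max}$ are the extreme eigenvalues of $\widehat A^{-1}A$, and $\gamma^S_{\min},\gamma^S_{\max}$ those of $\widehat S^{-1}\tilde S$. Standing assumption: $1\in[\gamma^A_{\min},\gamma^A_{\max}]$. *)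

theory Defs
  imports "HOL-Analysis.Analysis"
begin

definition sym_mat :: "real^'n^'n \<Rightarrow> bool" where
  "sym_mat M \<longleftrightarrow> transpose M = M"

definition pos_def :: "real^'n^'n \<Rightarrow> bool" where
  "pos_def M \<longleftrightarrow> sym_mat M \<and> (\<forall>x. x \<noteq> 0 \<longrightarrow> 0 < x \<bullet> (M *v x))"

definition neg_def :: "real^'n^'n \<Rightarrow> bool" where
  "neg_def M \<longleftrightarrow> sym_mat M \<and> (\<forall>x. x \<noteq> 0 \<longrightarrow> x \<bullet> (M *v x) < 0)"

definition mat_sqrt :: "real^'n^'n \<Rightarrow> real^'n^'n" where
  "mat_sqrt M = (THE S. pos_def S \<and> S ** S = M)"

definition mat_inv_sqrt :: "real^'n^'n \<Rightarrow> real^'n^'n" where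
  "mat_inv_sqrt M = matrix_inv (mat_sqrt M)"

definition eigenvalues :: "real^'n^'n \<Rightarrow> real set" where
  "eigenvalues M = {l. \<exists>v. v \<noteq> 0 \<and> M *v v = l *\<^sub>R v}"

definition eig_min :: "real^'n^'n \<Rightarrow> real" where
  "eig_min M = Min (eigenvalues M)"

definition eig_max :: "real^'n^'n \<Rightarrow> real" where
  "eig_max M = Max (eigenvalues M)"

end

theory Submission
  imports Defs
begin

text \<open>Conjugating with \<open>Ahat^(-1/2)\<close> and \<open>Shat^(-1/2)\<close> replaces \<open>Ahat^-1 A\<close> and
  \<open>Shat^-1 (B Ahat^-1 B^T)\<close> by the similar symmetric matrices \<open>At\<close> and \<open>R R^T\<close>, so their extreme
  eigenvalues \<open>a \<le> 1 \<le> b\<close> and \<open>c \<le> d\<close> bound the Rayleigh quotients of \<open>At\<close> and \<open>R R^T\<close>.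
  With \<open>y = R^T x\<close> we have \<open>x^T Z x = (1 - \<zeta>) y^T (\<zeta> I - At)^-1 y + \<zeta> |x|^2\<close> and
  \<open>c |x|^2 \<le> |y|^2 \<le> d |x|^2\<close>.
  For \<open>0 < \<zeta> < a\<close> the matrix \<open>At - \<zeta> I\<close> lies between \<open>(a - \<zeta>) I\<close> and \<open>(b - \<zeta>) I\<close>, so its
  inverse is at least \<open>I / (b - \<zeta>)\<close>, and \<open>\<zeta> (b + c) < c\<close> makes \<open>x^T Z x\<close> negative.
  For \<open>\<zeta> \<ge> b + d\<close> the matrix \<open>\<zeta> I - At\<close> is at least \<open>(\<zeta> - b) I \<ge> d I\<close>, so its inverse is at
  most \<open>I / (\<zeta> - b)\<close>, and \<open>x^T Z x\<close> is positive.
  The spectral facts used (Rayleigh bounds attained at eigenvalues, existence and uniqueness of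
  the positive definite square root) follow from the variational characterisation of the
  largest eigenvalue.\<close>

lemma inner_matrix_vector_transpose:
  "x \<bullet> ((M::real^'n^'m) *v y) = (transpose M *v x) \<bullet> y"
  by (simp add: dot_lmul_matrix)

lemma inner_gram_matrix:
  "x \<bullet> (((R::real^'n^'m) ** transpose R) *v x) = (transpose R *v x) \<bullet> (transpose R *v x)"
  by (metis inner_matrix_vector_transpose matrix_vector_mul_assoc)

lemma matrix_vector_scaleR: "(M::real^'n^'m) *v (k *\<^sub>R v) = k *\<^sub>R (M *v v)"
  by (metis scaleR_matrix_vector_assoc matrix_scaleR_vector_ac)

lemma uminus_matrix_vector: "(- (M::real^'n^'m)) *v x = - (M *v x)"
  by (simp add: matrix_vector_mult_def vec_eq_iff sum_negf)

lemma sym_mat_iff_self_adjoint: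
  "sym_mat (M::real^'n^'n) \<longleftrightarrow> (\<forall>x y. (M *v x) \<bullet> y = x \<bullet> (M *v y))"
proof
  assume "sym_mat M"
  then show "\<forall>x y. (M *v x) \<bullet> y = x \<bullet> (M *v y)"
    unfolding sym_mat_def by (metis inner_matrix_vector_transpose)
next
  assume "\<forall>x y. (M *v x) \<bullet> y = x \<bullet> (M *v y)"
  then have "\<forall>x y. (transpose M *v x) \<bullet> y = (M *v x) \<bullet> y"
    by (metis inner_matrix_vector_transpose)
  then have "\<forall>x. transpose M *v x = M *v x"
    by (metis vector_eq_rdot)
  then show "sym_mat M" unfolding sym_mat_def by (simp add: matrix_eq)
qed

lemma sym_mat_uminus: "sym_mat (M::real^'n^'n) \<Longrightarrow> sym_mat (- M)"
  unfolding sym_mat_iff_self_adjoint by (simp add: uminus_matrix_vector)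

lemma sym_mat_scaleR_add_mat:
  "sym_mat (M::real^'n^'n) \<Longrightarrow> sym_mat (c *\<^sub>R M + d *\<^sub>R mat 1)"
  unfolding sym_mat_def by (simp add: transpose_def vec_eq_iff mat_def)

lemma sym_mat_shift: "sym_mat (M::real^'n^'n) \<Longrightarrow> sym_mat (c *\<^sub>R mat 1 - M)"
  unfolding sym_mat_def by (simp add: transpose_def vec_eq_iff mat_def)

lemma quadratic_form_shift: "x \<bullet> ((c *\<^sub>R mat 1 - (M::real^'n^'n)) *v x) = c * (x \<bullet> x) - x \<bullet> (M *v x)"
  by (simp add: matrix_vector_mult_diff_rdistrib scaleR_matrix_vector_assoc[symmetric] inner_diff_right)

lemma sym_mat_congruence:
  "sym_mat (M::real^'n^'n) \<Longrightarrow> sym_mat (transpose (C::real^'m^'n) ** M ** C)"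
  unfolding sym_mat_def by (simp add: matrix_transpose_mul matrix_mul_assoc)

lemma pos_def_congruence:
  fixes M :: "real^'n^'n" and C :: "real^'m^'n"
  assumes "pos_def M" and "inj ((*v) C)"
  shows "pos_def (transpose C ** M ** C)"
  unfolding pos_def_def
proof (intro conjI allI impI)
  show "sym_mat (transpose C ** M ** C)"
    using assms(1) pos_def_def sym_mat_congruence by blast
  fix x :: "real^'m" assume "x \<noteq> 0"
  then have "C *v x \<noteq> 0" using assms(2) by (metis injD matrix_vector_mult_0_right)
  then have "0 < (C *v x) \<bullet> (M *v (C *v x))" using assms(1) by (simp add: pos_def_def)
  then show "0 < x \<bullet> ((transpose C ** M ** C) *v x)"
    by (metis inner_matrix_vector_transpose transpose_transpose matrix_vector_mul_assoc)
qed

lemma pos_def_gram: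
  assumes "inj ((*v) (transpose (R::real^'n^'m)))"
  shows "pos_def (R ** transpose R)"
proof -
  have "pos_def (mat 1 :: real^'n^'n)" by (simp add: pos_def_def sym_mat_def)
  from pos_def_congruence[OF this assms] show ?thesis by simp
qed

lemma matrix_inv_right: "invertible (A::real^'n^'n) \<Longrightarrow> A ** matrix_inv A = mat 1"
  unfolding matrix_inv_def invertible_def by (rule someI2_ex) auto

lemma matrix_inv_left: "invertible (A::real^'n^'n) \<Longrightarrow> matrix_inv A ** A = mat 1"
  unfolding matrix_inv_def invertible_def by (rule someI2_ex) auto

lemma matrix_inv_unique: "(A::real^'n^'n) ** B = mat 1 \<Longrightarrow> matrix_inv A = B"
  by (metis invertible_right_inverse matrix_inv_left matrix_mul_assoc matrix_mul_lid matrix_mul_rid)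

lemma matrix_inv_uminus:
  assumes "invertible (A::real^'n^'n)"
  shows "invertible (- A)" and "matrix_inv (- A) = - matrix_inv A"
proof -
  have "(- A) ** (- matrix_inv A) = A ** matrix_inv A"
    by (simp add: matrix_matrix_mult_def)
  then have "(- A) ** (- matrix_inv A) = mat 1" using assms matrix_inv_right by simp
  then show "invertible (- A)" and "matrix_inv (- A) = - matrix_inv A"
    by (auto simp: invertible_right_inverse matrix_inv_unique)
qed

lemma sym_mat_matrix_inv:
  assumes "sym_mat (E::real^'n^'n)" and "invertible E"
  shows "sym_mat (matrix_inv E)"
proof -
  have "transpose (matrix_inv E) ** E = mat 1"
    using assms matrix_inv_right unfolding sym_mat_def by (metis matrix_transpose_mul transpose_mat)
  then show ?thesis
    unfolding sym_mat_def by (metis matrix_inv_unique matrix_left_right_inverse)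
qed

lemma invertible_if_form_nonzero:
  assumes "\<forall>x. x \<noteq> 0 \<longrightarrow> x \<bullet> ((M::real^'n^'n) *v x) \<noteq> 0"
  shows "invertible M"
proof -
  have "inj ((*v) M)"
  proof (rule injI)
    fix x y assume "M *v x = M *v y"
    then have "(x - y) \<bullet> (M *v (x - y)) = 0" by (simp add: matrix_vector_mult_diff_distrib)
    then show "x = y" using assms by (metis eq_iff_diff_eq_0)
  qed
  then show ?thesis using matrix_left_invertible_injective invertible_left_inverse by blast
qed

lemma pos_def_invertible: "pos_def (M::real^'n^'n) \<Longrightarrow> invertible M"
  by (rule invertible_if_form_nonzero) (auto simp: pos_def_def dest: less_imp_neq)

lemma invertible_if_coercive:
  assumes "0 < \<alpha>" and "\<forall>x. \<alpha> * (x \<bullet> x) \<le> x \<bullet> ((M::real^'n^'n) *v x)"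
  shows "invertible M"
proof (rule invertible_if_form_nonzero, intro allI impI)
  fix x :: "real^'n" assume "x \<noteq> 0"
  then have "0 < \<alpha> * (x \<bullet> x)" using assms(1) by simp
  then show "x \<bullet> (M *v x) \<noteq> 0" using assms(2) by (metis not_less)
qed

lemma linear_coeff_zero_if_quadratic_nonneg:
  fixes b c :: real
  assumes "\<forall>t. 0 \<le> b * t + c * t\<^sup>2"
  shows "b = 0"
proof -
  define k where "k = 1 / (\<bar>c\<bar> + 1)"
  have k: "0 < k" "c * k < 1" unfolding k_def by (auto simp: field_simps abs_if)
  have "0 \<le> b * (- b * k) + c * (- b * k)\<^sup>2" using assms by blast
  then have "0 \<le> - (b\<^sup>2 * (k * (1 - c * k)))" by (simp add: algebra_simps power2_eq_square)
  moreover have "0 < k * (1 - c * k)" using k by simp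
  ultimately show ?thesis by (metis mult_pos_pos neg_0_le_iff_le not_le zero_less_power2)
qed

lemma psd_form_null_vector:
  fixes N :: "real^'n^'n"
  assumes "sym_mat N" and "subspace V" and "x \<in> V" and "y \<in> V"
    and "\<forall>z\<in>V. 0 \<le> z \<bullet> (N *v z)" and "x \<bullet> (N *v x) = 0"
  shows "y \<bullet> (N *v x) = 0"
proof -
  have sym: "x \<bullet> (N *v y) = y \<bullet> (N *v x)"
    using assms(1) unfolding sym_mat_iff_self_adjoint by (metis inner_commute)
  have "0 \<le> 2 * (y \<bullet> (N *v x)) * t + (y \<bullet> (N *v y)) * t\<^sup>2" for t
  proof -
    have "x + t *\<^sub>R y \<in> V" using assms(2-4) by (simp add: subspace_add subspace_scale)
    then have "0 \<le> (x + t *\<^sub>R y) \<bullet> (N *v (x + t *\<^sub>R y))" using assms(5) by blast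
    also have "\<dots> = 2 * (y \<bullet> (N *v x)) * t + (y \<bullet> (N *v y)) * t\<^sup>2"
      using sym assms(6) by (simp add: matrix_vector_scaleR power2_eq_square algebra_simps)
    finally show ?thesis .
  qed
  then have "2 * (y \<bullet> (N *v x)) = 0" by (intro linear_coeff_zero_if_quadratic_nonneg) blast
  then show ?thesis by simp
qed

lemma rayleigh_max_attained:
  fixes M :: "real^'n^'n"
  assumes "subspace V" and "V \<noteq> {0}"
  obtains x where "x \<in> V" "norm x = 1" "\<forall>y\<in>V. y \<bullet> (M *v y) \<le> (x \<bullet> (M *v x)) * (y \<bullet> y)"
proof -
  let ?K = "sphere 0 1 \<inter> V"
  have "compact ?K" using assms(1) by (simp add: closed_subspace compact_Int_closed)
  moreover obtain v where "v \<in> V" "v \<noteq> 0" using assms subspace_0 by blast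
  then have "sgn v \<in> ?K" using assms(1) by (simp add: sgn_div_norm subspace_scale norm_sgn)
  moreover have "continuous_on ?K (\<lambda>y. y \<bullet> (M *v y))"
    by (intro continuous_intros linear_continuous_on matrix_vector_mul_bounded_linear)
  ultimately obtain x where x: "x \<in> ?K" "\<forall>y\<in>?K. y \<bullet> (M *v y) \<le> x \<bullet> (M *v x)"
    using continuous_attains_sup[of ?K] by blast
  have "y \<bullet> (M *v y) \<le> (x \<bullet> (M *v x)) * (y \<bullet> y)" if "y \<in> V" for y
  proof (cases "y = 0")
    case False
    then have "sgn y \<in> ?K" using assms(1) that by (simp add: sgn_div_norm subspace_scale norm_sgn)
    then have "(y \<bullet> y) * (sgn y \<bullet> (M *v sgn y)) \<le> (y \<bullet> y) * (x \<bullet> (M *v x))"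
      using x(2) by (simp add: mult_left_mono)
    moreover have "y \<bullet> (M *v y) = (y \<bullet> y) * (sgn y \<bullet> (M *v sgn y))"
      using False by (simp add: sgn_div_norm matrix_vector_scaleR power2_norm_eq_inner[symmetric]
          field_simps power2_eq_square)
    ultimately show ?thesis by (simp add: mult.commute)
  qed simp
  then show ?thesis using that x(1) by auto
qed

lemma sym_mat_rayleigh_max_eigenvector:
  fixes M :: "real^'n^'n"
  assumes "sym_mat M" and "subspace V" and "\<forall>y\<in>V. M *v y \<in> V" and "V \<noteq> {0}"
  obtains x where "x \<in> V" "norm x = 1" "M *v x = (x \<bullet> (M *v x)) *\<^sub>R x"
    "\<forall>y\<in>V. y \<bullet> (M *v y) \<le> (x \<bullet> (M *v x)) * (y \<bullet> y)"
proof -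
  obtain x where x: "x \<in> V" "norm x = 1" and max: "\<forall>y\<in>V. y \<bullet> (M *v y) \<le> (x \<bullet> (M *v x)) * (y \<bullet> y)"
    using rayleigh_max_attained[OF assms(2,4)] by blast
  define N where "N = (x \<bullet> (M *v x)) *\<^sub>R mat 1 - M"
  have Nv: "N *v y = (x \<bullet> (M *v x)) *\<^sub>R y - M *v y" for y
    unfolding N_def by (simp add: matrix_vector_mult_diff_rdistrib scaleR_matrix_vector_assoc[symmetric])
  have "sym_mat N"
    using assms(1) unfolding sym_mat_iff_self_adjoint Nv by (simp add: inner_diff_left inner_diff_right)
  moreover have "\<forall>z\<in>V. 0 \<le> z \<bullet> (N *v z)" using max by (simp add: Nv inner_diff_right)
  moreover have "x \<bullet> (N *v x) = 0" using x(2) by (simp add: Nv inner_diff_right norm_eq_1)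
  moreover have "N *v x \<in> V" using assms(2,3) x(1) by (simp add: Nv subspace_diff subspace_scale)
  ultimately have "(N *v x) \<bullet> (N *v x) = 0" using psd_form_null_vector assms(2) x(1) by blast
  then have "M *v x = (x \<bullet> (M *v x)) *\<^sub>R x" by (simp add: Nv)
  then show ?thesis using that x max by blast
qed

text \<open>Deflation: the orthogonal complement of an eigenvector inside an invariant subspace is
  again invariant.\<close>
lemma sym_mat_orthonormal_eigenbasis_subspace:
  fixes M :: "real^'n^'n"
  assumes "sym_mat M"
  shows "subspace V \<Longrightarrow> \<forall>y\<in>V. M *v y \<in> V \<Longrightarrow> \<exists>B. B \<subseteq> V \<and> span B = V \<and> pairwise orthogonal B \<and>
     (\<forall>b\<in>B. norm b = 1 \<and> M *v b = (b \<bullet> (M *v b)) *\<^sub>R b)"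
proof (induction "dim V" arbitrary: V rule: less_induct)
  case less
  show ?case
  proof (cases "V = {0}")
    case True
    then show ?thesis by (intro exI[of _ "{}"]) auto
  next
    case False
    obtain x where x: "x \<in> V" "norm x = 1" "M *v x = (x \<bullet> (M *v x)) *\<^sub>R x"
      using sym_mat_rayleigh_max_eigenvector[OF assms less.prems False] by blast
    define W where "W = {y\<in>V. x \<bullet> y = 0}"
    have W: "subspace W"
      using less.prems(1) unfolding W_def subspace_def by (auto simp: inner_add_right)
    have "x \<bullet> (M *v y) = 0" if "y \<in> W" for y
      using assms that x(3) unfolding sym_mat_iff_self_adjoint W_def
      by (metis (mono_tags, lifting) inner_scaleR_left mem_Collect_eq mult_zero_right)
    then have W_inv: "\<forall>y\<in>W. M *v y \<in> W" using less.prems(2) unfolding W_def by blast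
    have "x \<notin> W" using x(2) unfolding W_def by (auto simp: norm_eq_1)
    then have "W \<subset> V" using x(1) unfolding W_def by blast
    then have "dim W < dim V"
      using W less.prems(1) by (metis dim_psubset span_eq_iff)
    then obtain B' where B': "B' \<subseteq> W" "span B' = W" "pairwise orthogonal B'"
      "\<forall>b\<in>B'. norm b = 1 \<and> M *v b = (b \<bullet> (M *v b)) *\<^sub>R b"
      using less.hyps[OF _ W W_inv] by blast
    have "V \<subseteq> span (insert x B')"
    proof
      fix y assume "y \<in> V"
      then have "y - (x \<bullet> y) *\<^sub>R x \<in> span B'"
        using x(1,2) less.prems(1) unfolding B'(2) W_def
        by (simp add: subspace_diff subspace_scale inner_diff_right norm_eq_1)
      then have "y - (x \<bullet> y) *\<^sub>R x + (x \<bullet> y) *\<^sub>R x \<in> span (insert x B')"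
        by (meson span_add span_base span_mono span_scale insertI1 subset_insertI subsetD)
      then show "y \<in> span (insert x B')" by simp
    qed
    moreover have "insert x B' \<subseteq> V" using B'(1) x(1) unfolding W_def by auto
    moreover have "pairwise orthogonal (insert x B')"
      using B'(1,3) by (auto simp: pairwise_insert orthogonal_def W_def inner_commute)
    ultimately show ?thesis using less.prems(1) B'(4) x
      by (intro exI[of _ "insert x B'"]) (auto simp: span_minimal subset_antisym)
  qed
qed

lemma sym_mat_orthonormal_eigenbasis:
  fixes M :: "real^'n^'n"
  assumes "sym_mat M"
  obtains B where "finite B" "span B = UNIV" "pairwise orthogonal B"
    "\<forall>b\<in>B. norm b = 1 \<and> M *v b = (b \<bullet> (M *v b)) *\<^sub>R b"
  using sym_mat_orthonormal_eigenbasis_subspace[OF assms subspace_UNIV] pairwise_orthogonal_imp_finite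
  by blast

lemma eigenvalue_rayleigh:
  assumes "l \<in> eigenvalues (M::real^'n^'n)"
  obtains v where "v \<noteq> 0" "v \<bullet> (M *v v) = l * (v \<bullet> v)"
  using assms unfolding eigenvalues_def by auto

lemma sym_mat_eigenvectors_orthogonal:
  assumes "sym_mat (M::real^'n^'n)" and "l \<noteq> m" and "M *v u = l *\<^sub>R u" and "M *v v = m *\<^sub>R v"
  shows "u \<bullet> v = 0"
proof -
  have "l * (u \<bullet> v) = m * (u \<bullet> v)"
    using assms(1,3,4) unfolding sym_mat_iff_self_adjoint by (metis inner_scaleR_left inner_scaleR_right)
  then show ?thesis using assms(2) by simp
qed

lemma sym_mat_finite_eigenvalues:
  assumes "sym_mat (M::real^'n^'n)"
  shows "finite (eigenvalues M)"
proof -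
  define v where "v l = (SOME v. v \<noteq> 0 \<and> M *v v = l *\<^sub>R v)" for l
  have v: "v l \<noteq> 0 \<and> M *v v l = l *\<^sub>R v l" if "l \<in> eigenvalues M" for l
    using that unfolding eigenvalues_def v_def by (metis (mono_tags, lifting) mem_Collect_eq)
  have "inj_on v (eigenvalues M)"
    by (rule inj_onI) (metis v scaleR_cancel_right)
  moreover have "pairwise orthogonal (v ` eigenvalues M)"
    unfolding pairwise_def orthogonal_def using v sym_mat_eigenvectors_orthogonal[OF assms]
    by (metis imageE)
  ultimately show ?thesis using pairwise_orthogonal_imp_finite finite_imageD by blast
qed

lemma eig_max_eqI:
  assumes "finite (eigenvalues M)" and "l \<in> eigenvalues M"
    and "\<forall>y. y \<bullet> ((M::real^'n^'n) *v y) \<le> l * (y \<bullet> y)"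
  shows "eig_max M = l"
  unfolding eig_max_def
proof (rule Max_eqI[OF assms(1) _ assms(2)])
  fix m assume "m \<in> eigenvalues M"
  then obtain v where "v \<noteq> 0" "v \<bullet> (M *v v) = m * (v \<bullet> v)" by (rule eigenvalue_rayleigh)
  then show "m \<le> l" using assms(3) by (metis inner_gt_zero_iff mult_le_cancel_right_pos)
qed

lemma eig_min_eqI:
  assumes "finite (eigenvalues M)" and "l \<in> eigenvalues M"
    and "\<forall>y. l * (y \<bullet> y) \<le> y \<bullet> ((M::real^'n^'n) *v y)"
  shows "eig_min M = l"
  unfolding eig_min_def
proof (rule Min_eqI[OF assms(1) _ assms(2)])
  fix m assume "m \<in> eigenvalues M"
  then obtain v where "v \<noteq> 0" "v \<bullet> (M *v v) = m * (v \<bullet> v)" by (rule eigenvalue_rayleigh)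
  then show "l \<le> m" using assms(3) by (metis inner_gt_zero_iff mult_le_cancel_right_pos)
qed

lemma UNIV_vec_neq_zero: "(UNIV :: (real^'n) set) \<noteq> {0}"
proof -
  have "axis undefined 1 \<noteq> (0 :: real^'n)" by simp
  then show ?thesis by blast
qed

lemma sym_mat_eig_max:
  assumes "sym_mat (M::real^'n^'n)"
  shows "eig_max M \<in> eigenvalues M" and "y \<bullet> (M *v y) \<le> eig_max M * (y \<bullet> y)"
proof -
  obtain x where x: "norm x = 1" "M *v x = (x \<bullet> (M *v x)) *\<^sub>R x"
    and max: "\<forall>y. y \<bullet> (M *v y) \<le> (x \<bullet> (M *v x)) * (y \<bullet> y)"
    using sym_mat_rayleigh_max_eigenvector[OF assms subspace_UNIV _ UNIV_vec_neq_zero] by auto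
  have "x \<noteq> 0" using x(1) by auto
  then have l: "x \<bullet> (M *v x) \<in> eigenvalues M" using x(2) unfolding eigenvalues_def by blast
  have "eig_max M = x \<bullet> (M *v x)"
    by (rule eig_max_eqI[OF sym_mat_finite_eigenvalues[OF assms] l max])
  then show "eig_max M \<in> eigenvalues M" and "y \<bullet> (M *v y) \<le> eig_max M * (y \<bullet> y)"
    using l max by simp_all
qed

lemma eigenvalues_uminus: "eigenvalues (- (M::real^'n^'n)) = uminus ` eigenvalues M"
proof -
  have "eigenvalues (- M) \<subseteq> uminus ` eigenvalues M" for M :: "real^'n^'n"
  proof
    fix l assume "l \<in> eigenvalues (- M)"
    then obtain v where v: "v \<noteq> 0" "(- M) *v v = l *\<^sub>R v" unfolding eigenvalues_def by blast
    have "M *v v = - ((- M) *v v)" by (simp add: uminus_matrix_vector)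
    also have "\<dots> = (- l) *\<^sub>R v" using v(2) by simp
    finally have "- l \<in> eigenvalues M" using v(1) unfolding eigenvalues_def by blast
    then show "l \<in> uminus ` eigenvalues M" by force
  qed
  from this[of M] this[of "- M"] show ?thesis by auto
qed

lemma sym_mat_eig_min:
  assumes "sym_mat (M::real^'n^'n)"
  shows "eig_min M \<in> eigenvalues M" and "eig_min M * (y \<bullet> y) \<le> y \<bullet> (M *v y)"
proof -
  have "- eig_max (- M) \<in> eigenvalues M"
    using sym_mat_eig_max(1)[OF sym_mat_uminus[OF assms]] eigenvalues_uminus by force
  moreover have "\<forall>y. - eig_max (- M) * (y \<bullet> y) \<le> y \<bullet> (M *v y)"
  proof
    fix y
    have "- (y \<bullet> (M *v y)) \<le> eig_max (- M) * (y \<bullet> y)"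
      using sym_mat_eig_max(2)[OF sym_mat_uminus[OF assms]] by (simp add: uminus_matrix_vector)
    then show "- eig_max (- M) * (y \<bullet> y) \<le> y \<bullet> (M *v y)" by linarith
  qed
  ultimately have "eig_min M = - eig_max (- M)"
    using eig_min_eqI sym_mat_finite_eigenvalues[OF assms] by blast
  then show "eig_min M \<in> eigenvalues M" and "eig_min M * (y \<bullet> y) \<le> y \<bullet> (M *v y)"
    using \<open>- eig_max (- M) \<in> eigenvalues M\<close> \<open>\<forall>y. - eig_max (- M) * (y \<bullet> y) \<le> y \<bullet> (M *v y)\<close> by auto
qed

lemma pos_def_eig_min_pos:
  assumes "pos_def (M::real^'n^'n)"
  shows "0 < eig_min M"
proof -
  have "sym_mat M" using assms by (simp add: pos_def_def)
  then obtain v where "v \<noteq> 0" "v \<bullet> (M *v v) = eig_min M * (v \<bullet> v)"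
    using sym_mat_eig_min(1) eigenvalue_rayleigh by blast
  moreover have "0 < v \<bullet> (M *v v)" using assms \<open>v \<noteq> 0\<close> by (simp add: pos_def_def)
  moreover have "0 < v \<bullet> v" using \<open>v \<noteq> 0\<close> by simp
  ultimately show ?thesis by (metis zero_less_mult_pos2)
qed

lemma matrix_eq_on_spanning_set:
  fixes M N :: "real^'n^'m"
  assumes "span B = UNIV" and "\<And>b. b \<in> B \<Longrightarrow> M *v b = N *v b"
  shows "M = N"
  unfolding matrix_eq
  using linear_eq_on_span[OF matrix_vector_mul_linear matrix_vector_mul_linear] assms by blast

lemma orthonormal_sum_apply:
  fixes B :: "(real^'n) set"
  assumes "finite B" and "pairwise orthogonal B" and "\<forall>b\<in>B. norm b = 1" and "c \<in> B"
  shows "(\<Sum>b\<in>B. (g b * (b \<bullet> c)) *\<^sub>R b) = g c *\<^sub>R c"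
proof -
  have "(\<Sum>b\<in>B - {c}. (g b * (b \<bullet> c)) *\<^sub>R b) = 0"
    using assms(2,4) by (intro sum.neutral) (auto simp: pairwise_def orthogonal_def)
  moreover have "c \<bullet> c = 1" using assms(3,4) by (simp add: norm_eq_1)
  ultimately show ?thesis using assms(1,4) by (simp add: sum.remove)
qed

lemma pos_def_orthonormal_weights:
  fixes B :: "(real^'n) set"
  assumes "finite B" and "span B = UNIV" and "pairwise orthogonal B" and "\<forall>b\<in>B. norm b = 1"
    and r_pos: "\<And>b. b \<in> B \<Longrightarrow> 0 < r b"
  obtains S where "pos_def S" and "\<And>b. b \<in> B \<Longrightarrow> S *v b = r b *\<^sub>R b"
proof -
  define S where "S = matrix (\<lambda>x. \<Sum>b\<in>B. (r b * (b \<bullet> x)) *\<^sub>R b)"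
  have "linear (\<lambda>x. \<Sum>b\<in>B. (r b * (b \<bullet> x)) *\<^sub>R b)"
    by (intro linear_compose_sum ballI linearI) (simp_all add: algebra_simps)
  then have Sx: "S *v x = (\<Sum>b\<in>B. (r b * (b \<bullet> x)) *\<^sub>R b)" for x
    unfolding S_def by (simp add: matrix_works)
  have form: "y \<bullet> (S *v x) = (\<Sum>b\<in>B. r b * (b \<bullet> x) * (b \<bullet> y))" for x y
    unfolding Sx by (simp add: inner_sum_right mult.assoc inner_commute)
  have "sym_mat S"
    unfolding sym_mat_iff_self_adjoint
  proof (intro allI)
    fix x y
    show "(S *v x) \<bullet> y = x \<bullet> (S *v y)"
      using form[of x y] form[of y x] by (simp add: inner_commute mult_ac)
  qed
  moreover have "0 < x \<bullet> (S *v x)" if "x \<noteq> 0" for x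
  proof -
    have "\<not> orthogonal x x" using \<open>x \<noteq> 0\<close> by (simp add: orthogonal_def)
    then obtain b where b: "b \<in> B" "b \<bullet> x \<noteq> 0"
      using orthogonal_to_span[of x B x] assms(2) by (auto simp: orthogonal_def inner_commute)
    have nonneg: "0 \<le> r c * (c \<bullet> x) * (c \<bullet> x)" if "c \<in> B" for c
      using r_pos[OF that] by (simp add: mult.assoc)
    have "0 < (b \<bullet> x) * (b \<bullet> x)" using b(2) not_real_square_gt_zero by blast
    then have "0 < r b * (b \<bullet> x) * (b \<bullet> x)" using r_pos[OF b(1)] by (metis mult.assoc mult_pos_pos)
    also have "\<dots> \<le> (\<Sum>b\<in>B. r b * (b \<bullet> x) * (b \<bullet> x))"
      using assms(1) nonneg by (intro member_le_sum[OF b(1)]) auto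
    finally show ?thesis by (simp add: form)
  qed
  moreover have "S *v b = r b *\<^sub>R b" if "b \<in> B" for b
    unfolding Sx by (rule orthonormal_sum_apply[OF assms(1,3,4) that])
  ultimately show ?thesis using that unfolding pos_def_def by blast
qed

lemma pos_def_sqrt_exists:
  assumes "pos_def (M::real^'n^'n)"
  obtains S where "pos_def S" and "S ** S = M"
proof -
  have "sym_mat M" using assms by (simp add: pos_def_def)
  then obtain B where B: "finite B" "span B = UNIV" "pairwise orthogonal B" "\<forall>b\<in>B. norm b = 1"
    and eig: "\<forall>b\<in>B. M *v b = (b \<bullet> (M *v b)) *\<^sub>R b"
    by (metis sym_mat_orthonormal_eigenbasis)
  define r where "r b = sqrt (b \<bullet> (M *v b))" for b
  have r_pos: "0 < r b" and r_sq: "r b * r b = b \<bullet> (M *v b)" if "b \<in> B" for b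
  proof -
    have "b \<noteq> 0" using B(4) that by auto
    then have "0 < b \<bullet> (M *v b)" using assms by (simp add: pos_def_def)
    then show "0 < r b" "r b * r b = b \<bullet> (M *v b)" by (simp_all add: r_def)
  qed
  obtain S where S: "pos_def S" and Sb: "\<And>b. b \<in> B \<Longrightarrow> S *v b = r b *\<^sub>R b"
    using pos_def_orthonormal_weights[OF B, of r] r_pos by blast
  have "S ** S = M"
  proof (rule matrix_eq_on_spanning_set[OF B(2)])
    fix b assume "b \<in> B"
    then have "(S ** S) *v b = (r b * r b) *\<^sub>R b"
      by (simp add: matrix_vector_mul_assoc[symmetric] Sb matrix_vector_scaleR)
    then show "(S ** S) *v b = M *v b" using \<open>b \<in> B\<close> eig r_sq by simp
  qed
  with S that show ?thesis by blast
qed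

text \<open>If \<open>S\<^sub>1^2 = S\<^sub>2^2\<close>, then \<open>D = S\<^sub>1 - S\<^sub>2\<close> solves \<open>S\<^sub>1 D + D S\<^sub>2 = 0\<close>; testing this against
  an eigenvector of \<open>D\<close> shows that every eigenvalue of \<open>D\<close> vanishes.\<close>
lemma pos_def_sqrt_unique:
  fixes S\<^sub>1 S\<^sub>2 :: "real^'n^'n"
  assumes "pos_def S\<^sub>1" and "pos_def S\<^sub>2" and "S\<^sub>1 ** S\<^sub>1 = S\<^sub>2 ** S\<^sub>2"
  shows "S\<^sub>1 = S\<^sub>2"
proof -
  define D where "D = S\<^sub>1 - S\<^sub>2"
  have Dv: "D *v v = S\<^sub>1 *v v - S\<^sub>2 *v v" for v
    unfolding D_def by (simp add: matrix_vector_mult_diff_rdistrib)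
  have sym: "\<forall>x y. (S *v x) \<bullet> y = x \<bullet> (S *v y)" if "pos_def S" for S :: "real^'n^'n"
    using that unfolding pos_def_def sym_mat_iff_self_adjoint by blast
  have "sym_mat D"
    using sym assms(1,2) unfolding sym_mat_iff_self_adjoint Dv by (simp add: inner_diff_left inner_diff_right)
  then obtain B where B: "span B = UNIV" "\<forall>b\<in>B. norm b = 1 \<and> D *v b = (b \<bullet> (D *v b)) *\<^sub>R b"
    by (metis sym_mat_orthonormal_eigenbasis)
  have "D *v b = 0 *v b" if "b \<in> B" for b
  proof -
    define \<mu> where "\<mu> = b \<bullet> (D *v b)"
    have Db: "D *v b = \<mu> *\<^sub>R b" using B(2) that unfolding \<mu>_def by blast
    have "S\<^sub>1 *v (D *v b) + D *v (S\<^sub>2 *v b) = (S\<^sub>1 ** S\<^sub>1) *v b - (S\<^sub>2 ** S\<^sub>2) *v b"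
      by (simp add: Dv matrix_vector_mult_diff_distrib matrix_vector_mul_assoc[symmetric])
    then have "b \<bullet> (S\<^sub>1 *v (D *v b)) + b \<bullet> (D *v (S\<^sub>2 *v b)) = 0"
      using assms(3) by (simp flip: inner_add_right)
    moreover have "b \<bullet> (D *v (S\<^sub>2 *v b)) = (D *v b) \<bullet> (S\<^sub>2 *v b)"
      using \<open>sym_mat D\<close> unfolding sym_mat_iff_self_adjoint by simp
    ultimately have "\<mu> * (b \<bullet> (S\<^sub>1 *v b) + b \<bullet> (S\<^sub>2 *v b)) = 0"
      by (simp add: Db matrix_vector_scaleR algebra_simps)
    moreover have "b \<noteq> 0" using B(2) that by auto
    then have "0 < b \<bullet> (S\<^sub>1 *v b) + b \<bullet> (S\<^sub>2 *v b)"
      using assms(1,2) unfolding pos_def_def by (simp add: add_pos_pos)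
    ultimately have "\<mu> = 0" by simp
    then show ?thesis using Db by simp
  qed
  then have "D = 0" by (rule matrix_eq_on_spanning_set[OF B(1)])
  then show ?thesis unfolding D_def by simp
qed

lemma mat_sqrt:
  assumes "pos_def (M::real^'n^'n)"
  shows "pos_def (mat_sqrt M)" and "mat_sqrt M ** mat_sqrt M = M"
proof -
  obtain S where S: "pos_def S" "S ** S = M" by (rule pos_def_sqrt_exists[OF assms])
  then have "\<exists>!S. pos_def S \<and> S ** S = M"
    by (auto intro: pos_def_sqrt_unique)
  then have "pos_def (mat_sqrt M) \<and> mat_sqrt M ** mat_sqrt M = M"
    unfolding mat_sqrt_def by (rule theI')
  then show "pos_def (mat_sqrt M)" and "mat_sqrt M ** mat_sqrt M = M" by simp_all
qed

lemma mat_inv_sqrt: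
  assumes "pos_def (M::real^'n^'n)"
  shows "mat_inv_sqrt M ** mat_sqrt M = mat 1" and "mat_sqrt M ** mat_inv_sqrt M = mat 1"
    and "transpose (mat_inv_sqrt M) = mat_inv_sqrt M"
    and "matrix_inv M = mat_inv_sqrt M ** mat_inv_sqrt M"
    and "inj ((*v) (mat_inv_sqrt M))"
proof -
  let ?S = "mat_sqrt M" and ?P = "mat_inv_sqrt M"
  have "invertible ?S" using mat_sqrt(1)[OF assms] by (rule pos_def_invertible)
  then show PS: "?P ** ?S = mat 1" and SP: "?S ** ?P = mat 1"
    unfolding mat_inv_sqrt_def by (simp_all add: matrix_inv_left matrix_inv_right)
  show "transpose ?P = ?P"
    using sym_mat_matrix_inv[OF _ \<open>invertible ?S\<close>] mat_sqrt(1)[OF assms]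
    unfolding mat_inv_sqrt_def pos_def_def sym_mat_def by blast
  have "M ** (?P ** ?P) = ?S ** (?S ** ?P) ** ?P" using mat_sqrt(2)[OF assms] by (simp add: matrix_mul_assoc)
  then show "matrix_inv M = ?P ** ?P" using SP by (simp add: matrix_inv_unique)
  show "inj ((*v) ?P)"
    by (rule inj_on_inverseI[where g = "(*v) ?S"]) (simp add: matrix_vector_mul_assoc SP)
qed

lemma eigenvalues_subset_similar:
  assumes "S ** P = mat 1"
  shows "eigenvalues (N::real^'n^'n) \<subseteq> eigenvalues (P ** N ** S)"
proof
  fix l assume "l \<in> eigenvalues N"
  then obtain v where v: "v \<noteq> 0" "N *v v = l *\<^sub>R v" unfolding eigenvalues_def by blast
  have SP: "S *v (P *v x) = x" for x using assms by (simp add: matrix_vector_mul_assoc)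
  have "P *v v \<noteq> 0" using v(1) SP by (metis matrix_vector_mult_0_right)
  moreover have "(P ** N ** S) *v (P *v v) = l *\<^sub>R (P *v v)"
    using v(2) by (simp add: matrix_vector_mul_assoc[symmetric] SP matrix_vector_scaleR)
  ultimately show "l \<in> eigenvalues (P ** N ** S)" unfolding eigenvalues_def by blast
qed

lemma eigenvalues_similar:
  assumes "P ** S = mat 1" and "S ** P = mat 1"
  shows "eigenvalues (P ** (N::real^'n^'n) ** S) = eigenvalues N"
proof
  have "S ** (P ** N ** S) ** P = (S ** P) ** N ** (S ** P)" by (simp add: matrix_mul_assoc)
  also have "\<dots> = N" using assms(2) by simp
  finally show "eigenvalues (P ** N ** S) \<subseteq> eigenvalues N"
    using eigenvalues_subset_similar[OF assms(1), of "P ** N ** S"] by simp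
qed (rule eigenvalues_subset_similar[OF assms(2)])

lemma eigenvalues_matrix_inv_mult:
  assumes "pos_def (H::real^'n^'n)"
  shows "eigenvalues (matrix_inv H ** X) = eigenvalues (mat_inv_sqrt H ** X ** mat_inv_sqrt H)"
proof -
  let ?P = "mat_inv_sqrt H" and ?S = "mat_sqrt H"
  have "?P ** (?P ** X ** ?P) ** ?S = ?P ** ?P ** X ** (?P ** ?S)" by (simp add: matrix_mul_assoc)
  also have "\<dots> = matrix_inv H ** X" using mat_inv_sqrt(1,4)[OF assms] by simp
  finally show ?thesis using eigenvalues_similar[OF mat_inv_sqrt(1,2)[OF assms]] by metis
qed

text \<open>Expand \<open>0 \<le> |u - \<alpha> E\<^sup>-\<^sup>1 u|\<^sup>2\<close>.\<close>
lemma inverse_form_upper_bound: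
  assumes "invertible (E::real^'n^'n)" and "0 \<le> \<alpha>" and "\<forall>x. \<alpha> * (x \<bullet> x) \<le> x \<bullet> (E *v x)"
  shows "\<alpha> * (u \<bullet> (matrix_inv E *v u)) \<le> u \<bullet> u"
proof -
  define y where "y = matrix_inv E *v u"
  have Ey: "E *v y = u"
    using matrix_inv_right[OF assms(1)] unfolding y_def by (simp add: matrix_vector_mul_assoc)
  have "\<alpha> * (\<alpha> * (y \<bullet> y)) \<le> \<alpha> * (u \<bullet> y)"
    using assms(2,3) Ey by (metis inner_commute mult_left_mono)
  moreover have "0 \<le> (u - \<alpha> *\<^sub>R y) \<bullet> (u - \<alpha> *\<^sub>R y)" by simp
  then have "0 \<le> u \<bullet> u - 2 * \<alpha> * (u \<bullet> y) + \<alpha> * (\<alpha> * (y \<bullet> y))"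
    by (simp add: inner_commute algebra_simps)
  ultimately show ?thesis unfolding y_def by linarith
qed

text \<open>Expand \<open>0 \<le> w \<bullet> E w\<close> for \<open>w = \<beta> E\<^sup>-\<^sup>1 u - u\<close>.\<close>
lemma inverse_form_lower_bound:
  assumes "sym_mat (E::real^'n^'n)" and "invertible E" and "0 < \<beta>"
    and "\<forall>x. 0 \<le> x \<bullet> (E *v x)" and "\<forall>x. x \<bullet> (E *v x) \<le> \<beta> * (x \<bullet> x)"
  shows "u \<bullet> u \<le> \<beta> * (u \<bullet> (matrix_inv E *v u))"
proof -
  define y where "y = matrix_inv E *v u"
  have Ey: "E *v y = u"
    using matrix_inv_right[OF assms(2)] unfolding y_def by (simp add: matrix_vector_mul_assoc)
  have "y \<bullet> (E *v u) = u \<bullet> u"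
    using assms(1) Ey unfolding sym_mat_iff_self_adjoint by metis
  then have "(\<beta> *\<^sub>R y - u) \<bullet> (E *v (\<beta> *\<^sub>R y - u))
      = \<beta> * (\<beta> * (u \<bullet> y)) - 2 * \<beta> * (u \<bullet> u) + u \<bullet> (E *v u)"
    by (simp add: matrix_vector_scaleR Ey inner_commute algebra_simps)
  moreover have "0 \<le> (\<beta> *\<^sub>R y - u) \<bullet> (E *v (\<beta> *\<^sub>R y - u))" using assms(4) by blast
  moreover have "u \<bullet> (E *v u) \<le> \<beta> * (u \<bullet> u)" using assms(5) by blast
  ultimately have "0 \<le> \<beta> * (\<beta> * (u \<bullet> y)) - \<beta> * (u \<bullet> u)" by linarith
  then have "0 \<le> \<beta> * (\<beta> * (u \<bullet> y) - u \<bullet> u)" by (simp add: right_diff_distrib)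
  then show ?thesis unfolding y_def using assms(3) by (simp add: zero_le_mult_iff)
qed

lemma quadratic_form_congruence_shift:
  fixes R :: "real^'n^'m" and K :: "real^'n^'n"
  shows "x \<bullet> ((c *\<^sub>R (R ** K ** transpose R) + d *\<^sub>R mat 1) *v x)
    = c * ((transpose R *v x) \<bullet> (K *v (transpose R *v x))) + d * (x \<bullet> x)"
  by (simp add: matrix_vector_mult_add_rdistrib scaleR_matrix_vector_assoc[symmetric] inner_add_right
      matrix_vector_mul_assoc[symmetric] inner_matrix_vector_transpose del: transpose_matrix_vector)

lemma sym_mat_congruence_shift:
  fixes R :: "real^'n^'m" and K :: "real^'n^'n"
  shows "sym_mat K \<Longrightarrow> sym_mat (c *\<^sub>R (R ** K ** transpose R) + d *\<^sub>R mat 1)"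
  using sym_mat_congruence[of K "transpose R"] by (simp add: sym_mat_scaleR_add_mat)

lemma shift_below_spectrum_inverse:
  fixes At :: "real^'n^'n"
  assumes "sym_mat At"
    and lower: "\<And>x. a * (x \<bullet> x) \<le> x \<bullet> (At *v x)" and upper: "\<And>x. x \<bullet> (At *v x) \<le> b * (x \<bullet> x)"
    and "\<zeta> < a"
  shows "invertible (\<zeta> *\<^sub>R mat 1 - At)"
    and "u \<bullet> u \<le> (b - \<zeta>) * - (u \<bullet> (matrix_inv (\<zeta> *\<^sub>R mat 1 - At) *v u))"
proof -
  define N where "N = - (\<zeta> *\<^sub>R mat 1 - At)"
  have N_form: "x \<bullet> (N *v x) = x \<bullet> (At *v x) - \<zeta> * (x \<bullet> x)" for x
    unfolding N_def uminus_matrix_vector inner_minus_right quadratic_form_shift by simp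
  have N_lower: "\<forall>x. (a - \<zeta>) * (x \<bullet> x) \<le> x \<bullet> (N *v x)"
    using lower by (simp add: N_form algebra_simps)
  have N_upper: "\<forall>x. x \<bullet> (N *v x) \<le> (b - \<zeta>) * (x \<bullet> x)"
    using upper by (simp add: N_form algebra_simps)
  have "a \<le> b" using lower[of "axis undefined 1"] upper[of "axis undefined 1"] by simp
  have N_nonneg: "\<forall>x. 0 \<le> x \<bullet> (N *v x)"
    using N_lower assms(4) by (metis diff_gt_0_iff_gt inner_ge_zero order.trans mult_nonneg_nonneg less_imp_le)
  have "invertible N" using N_lower assms(4) by (intro invertible_if_coercive[of "a - \<zeta>"]) auto
  then show inv: "invertible (\<zeta> *\<^sub>R mat 1 - At)" using matrix_inv_uminus(1) unfolding N_def by fastforce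
  have "sym_mat N" unfolding N_def by (intro sym_mat_uminus sym_mat_shift assms(1))
  from inverse_form_lower_bound[OF this \<open>invertible N\<close> _ N_nonneg N_upper]
  show "u \<bullet> u \<le> (b - \<zeta>) * - (u \<bullet> (matrix_inv (\<zeta> *\<^sub>R mat 1 - At) *v u))"
    using \<open>a \<le> b\<close> assms(4) matrix_inv_uminus(2)[OF inv] unfolding N_def
    by (simp add: uminus_matrix_vector)
qed

lemma shift_above_spectrum_inverse:
  fixes At :: "real^'n^'n"
  assumes upper: "\<And>x. x \<bullet> (At *v x) \<le> b * (x \<bullet> x)" and "b < \<zeta>"
  shows "invertible (\<zeta> *\<^sub>R mat 1 - At)"
    and "(\<zeta> - b) * (u \<bullet> (matrix_inv (\<zeta> *\<^sub>R mat 1 - At) *v u)) \<le> u \<bullet> u"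
proof -
  have lower: "\<forall>x. (\<zeta> - b) * (x \<bullet> x) \<le> x \<bullet> ((\<zeta> *\<^sub>R mat 1 - At) *v x)"
    using upper unfolding quadratic_form_shift by (simp add: algebra_simps)
  then show inv: "invertible (\<zeta> *\<^sub>R mat 1 - At)" using assms(2) by (intro invertible_if_coercive) auto
  show "(\<zeta> - b) * (u \<bullet> (matrix_inv (\<zeta> *\<^sub>R mat 1 - At) *v u)) \<le> u \<bullet> u"
    using inverse_form_upper_bound[OF inv _ lower] assms(2) by simp
qed

lemma shifted_schur_neg_def:
  fixes At :: "real^'n^'n" and R :: "real^'n^'m"
  assumes "sym_mat At"
    and lower: "\<And>x. a * (x \<bullet> x) \<le> x \<bullet> (At *v x)" and upper: "\<And>x. x \<bullet> (At *v x) \<le> b * (x \<bullet> x)"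
    and gram: "\<And>x. c * (x \<bullet> x) \<le> x \<bullet> ((R ** transpose R) *v x)"
    and "0 < \<zeta>" and "\<zeta> < a" and "a \<le> 1" and "\<zeta> * (b + c) < c"
  shows "neg_def ((1 - \<zeta>) *\<^sub>R (R ** matrix_inv (\<zeta> *\<^sub>R mat 1 - At) ** transpose R) + \<zeta> *\<^sub>R mat 1)"
    (is "neg_def ?Z")
proof -
  note inv = shift_below_spectrum_inverse[OF assms(1) lower upper assms(6)]
  have "a \<le> b" using lower[of "axis undefined 1"] upper[of "axis undefined 1"] by simp
  have "\<zeta> * (b - \<zeta>) < \<zeta> * b" using assms(5) by (simp add: right_diff_distrib)
  also have "\<dots> < (1 - \<zeta>) * c" using assms(8) by (simp add: algebra_simps)
  finally have gap: "\<zeta> * (b - \<zeta>) < (1 - \<zeta>) * c" .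
  show ?thesis
    unfolding neg_def_def
  proof (intro conjI allI impI)
    show "sym_mat ?Z" by (intro sym_mat_congruence_shift sym_mat_matrix_inv sym_mat_shift assms(1) inv(1))
    fix x :: "real^'m" assume "x \<noteq> 0"
    define u where "u = transpose R *v x"
    define p where "p = - (u \<bullet> (matrix_inv (\<zeta> *\<^sub>R mat 1 - At) *v u))"
    have Z_form: "x \<bullet> (?Z *v x) = - ((1 - \<zeta>) * p) + \<zeta> * (x \<bullet> x)"
      unfolding quadratic_form_congruence_shift p_def u_def by simp
    have "(1 - \<zeta>) * (u \<bullet> u) \<le> (1 - \<zeta>) * ((b - \<zeta>) * p)"
      using inv(2) assms(6,7) unfolding p_def by (intro mult_left_mono) auto
    moreover have "(1 - \<zeta>) * (c * (x \<bullet> x)) \<le> (1 - \<zeta>) * (u \<bullet> u)"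
      using gram assms(6,7) unfolding u_def inner_gram_matrix by (intro mult_left_mono) auto
    moreover have "(\<zeta> * (b - \<zeta>)) * (x \<bullet> x) < ((1 - \<zeta>) * c) * (x \<bullet> x)"
      using gap \<open>x \<noteq> 0\<close> by simp
    ultimately have "(b - \<zeta>) * (- ((1 - \<zeta>) * p) + \<zeta> * (x \<bullet> x)) < 0"
      by (simp add: algebra_simps)
    then show "x \<bullet> (?Z *v x) < 0"
      unfolding Z_form using \<open>a \<le> b\<close> assms(6) by (simp add: mult_less_0_iff)
  qed
qed

lemma shifted_schur_pos_def:
  fixes At :: "real^'n^'n" and R :: "real^'n^'m"
  assumes "sym_mat At"
    and upper: "\<And>x. x \<bullet> (At *v x) \<le> b * (x \<bullet> x)"
    and gram: "\<And>x. x \<bullet> ((R ** transpose R) *v x) \<le> d * (x \<bullet> x)"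
    and "0 < d" and "1 \<le> b" and "b + d \<le> \<zeta>"
  shows "pos_def ((1 - \<zeta>) *\<^sub>R (R ** matrix_inv (\<zeta> *\<^sub>R mat 1 - At) ** transpose R) + \<zeta> *\<^sub>R mat 1)"
    (is "pos_def ?Z")
proof -
  have "b < \<zeta>" using assms(4,6) by simp
  note inv = shift_above_spectrum_inverse[OF upper this]
  show ?thesis
    unfolding pos_def_def
  proof (intro conjI allI impI)
    show "sym_mat ?Z" by (intro sym_mat_congruence_shift sym_mat_matrix_inv sym_mat_shift assms(1) inv(1))
    fix x :: "real^'m" assume "x \<noteq> 0"
    define u where "u = transpose R *v x"
    define p where "p = u \<bullet> (matrix_inv (\<zeta> *\<^sub>R mat 1 - At) *v u)"
    have Z_form: "x \<bullet> (?Z *v x) = (1 - \<zeta>) * p + \<zeta> * (x \<bullet> x)"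
      unfolding quadratic_form_congruence_shift p_def u_def ..
    have "(1 - \<zeta>) * (u \<bullet> u) \<le> (1 - \<zeta>) * ((\<zeta> - b) * p)"
      using inv(2) assms(4-6) unfolding p_def by (intro mult_left_mono_neg) auto
    moreover have "(1 - \<zeta>) * (d * (x \<bullet> x)) \<le> (1 - \<zeta>) * (u \<bullet> u)"
      using gram assms(4-6) unfolding u_def inner_gram_matrix by (intro mult_left_mono_neg) auto
    moreover have "\<zeta> * (d * (x \<bullet> x)) \<le> \<zeta> * ((\<zeta> - b) * (x \<bullet> x))"
      using assms(4-6) by (intro mult_left_mono mult_right_mono) auto
    moreover have "0 < d * (x \<bullet> x)" using assms(4) \<open>x \<noteq> 0\<close> by simp
    ultimately have "0 < (\<zeta> - b) * ((1 - \<zeta>) * p + \<zeta> * (x \<bullet> x))"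
      by (simp add: algebra_simps)
    then show "0 < x \<bullet> (?Z *v x)"
      unfolding Z_form using \<open>b < \<zeta>\<close> by (simp add: zero_less_mult_iff)
  qed
qed

lemma shifted_schur_definite:
  fixes At :: "real^'n^'n" and R :: "real^'n^'m"
  assumes "pos_def At" and "pos_def (R ** transpose R)"
    and "eig_min At \<le> 1" and "1 \<le> eig_max At"
    and "(0 < \<zeta> \<and> \<zeta> < min (eig_min At)
            (eig_min (R ** transpose R) / (eig_max At + eig_min (R ** transpose R))))
         \<or> eig_max At + eig_max (R ** transpose R) \<le> \<zeta>"
  shows "invertible (\<zeta> *\<^sub>R mat 1 - At) \<and>
    (pos_def ((1 - \<zeta>) *\<^sub>R (R ** matrix_inv (\<zeta> *\<^sub>R mat 1 - At) ** transpose R) + \<zeta> *\<^sub>R mat 1) \<or>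
     neg_def ((1 - \<zeta>) *\<^sub>R (R ** matrix_inv (\<zeta> *\<^sub>R mat 1 - At) ** transpose R) + \<zeta> *\<^sub>R mat 1))"
proof -
  let ?T = "R ** transpose R"
  have "sym_mat At" and "sym_mat ?T" using assms(1,2) by (simp_all add: pos_def_def)
  note bounds = sym_mat_eig_min(2)[OF this(1)] sym_mat_eig_max(2)[OF this(1)]
    sym_mat_eig_min(2)[OF this(2)] sym_mat_eig_max(2)[OF this(2)]
  have "0 < eig_min ?T" by (rule pos_def_eig_min_pos[OF assms(2)])
  moreover have "eig_min ?T \<le> eig_max ?T"
    using bounds(3,4)[of "axis undefined 1"] by simp
  ultimately have "0 < eig_max ?T" by linarith
  show ?thesis
  proof (cases "eig_max At + eig_max ?T \<le> \<zeta>")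
    case True
    have "eig_max At < \<zeta>" using True \<open>0 < eig_max ?T\<close> by simp
    then show ?thesis
      using shift_above_spectrum_inverse(1)[OF bounds(2)]
        shifted_schur_pos_def[OF \<open>sym_mat At\<close> bounds(2,4) \<open>0 < eig_max ?T\<close> assms(4) True] by simp
  next
    case False
    then have "0 < \<zeta>" "\<zeta> < eig_min At" "\<zeta> < eig_min ?T / (eig_max At + eig_min ?T)" using assms(5) by auto
    moreover have "0 < eig_max At + eig_min ?T" using assms(4) \<open>0 < eig_min ?T\<close> by simp
    ultimately have "\<zeta> * (eig_max At + eig_min ?T) < eig_min ?T" by (simp add: pos_less_divide_eq)
    then show ?thesis
      using shift_below_spectrum_inverse(1)[OF \<open>sym_mat At\<close> bounds(1,2) \<open>\<zeta> < eig_min At\<close>]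
        shifted_schur_neg_def[OF \<open>sym_mat At\<close> bounds(1,2,3) \<open>0 < \<zeta>\<close> \<open>\<zeta> < eig_min At\<close> assms(3)]
      by simp
  qed
qed

theorem lemma4:
  fixes A Ahat :: "real^'n^'n" and B :: "real^'n^'m" and Shat :: "real^'m^'m"
    and \<zeta> :: real
  assumes "pos_def A" and "rank B = CARD('m)"
    and "pos_def Ahat" and "pos_def Shat"
    and "eig_min (matrix_inv Ahat ** A) \<le> 1" and "1 \<le> eig_max (matrix_inv Ahat ** A)"
    and "(0 < \<zeta> \<and> \<zeta> < min (eig_min (matrix_inv Ahat ** A))
            (eig_min (matrix_inv Shat ** (B ** matrix_inv Ahat ** transpose B)) /
             (eig_max (matrix_inv Ahat ** A) + eig_min (matrix_inv Shat ** (B ** matrix_inv Ahat ** transpose B)))))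
         \<or> \<zeta> \<ge> eig_max (matrix_inv Ahat ** A) + eig_max (matrix_inv Shat ** (B ** matrix_inv Ahat ** transpose B))"
  shows "let At = mat_inv_sqrt Ahat ** A ** mat_inv_sqrt Ahat;
             R = mat_inv_sqrt Shat ** B ** mat_inv_sqrt Ahat;
             Z = (1 - \<zeta>) *\<^sub>R (R ** matrix_inv (\<zeta> *\<^sub>R mat 1 - At) ** transpose R) + \<zeta> *\<^sub>R mat 1
         in invertible (\<zeta> *\<^sub>R mat 1 - At) \<and> (pos_def Z \<or> neg_def Z)"
proof -
  let ?P = "mat_inv_sqrt Ahat" and ?Q = "mat_inv_sqrt Shat"
  let ?At = "?P ** A ** ?P" and ?R = "?Q ** B ** ?P"
  note P = mat_inv_sqrt(3-5)[OF assms(3)] and Q = mat_inv_sqrt(3-5)[OF assms(4)]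
  have RT: "transpose ?R = ?P ** transpose B ** ?Q"
    using P(1) Q(1) by (simp add: matrix_transpose_mul matrix_mul_assoc)
  have At: "pos_def ?At" using pos_def_congruence[OF assms(1) P(3)] P(1) by simp
  have "inj ((*v) (transpose B))"
    using assms(2) by (metis rank_transpose full_rank_injective)
  then have "inj ((*v) ?P \<circ> (*v) (transpose B) \<circ> (*v) ?Q)" using P(3) Q(3) by (simp add: inj_compose)
  moreover have "(*v) (transpose ?R) = (*v) ?P \<circ> (*v) (transpose B) \<circ> (*v) ?Q"
    by (simp add: RT fun_eq_iff matrix_vector_mul_assoc matrix_mul_assoc del: transpose_matrix_vector)
  ultimately have T: "pos_def (?R ** transpose ?R)" by (simp add: pos_def_gram)
  have "?Q ** (B ** matrix_inv Ahat ** transpose B) ** ?Q = ?R ** transpose ?R"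
    using P(2) by (simp add: RT matrix_mul_assoc)
  then have eig_S: "eigenvalues (matrix_inv Shat ** (B ** matrix_inv Ahat ** transpose B))
      = eigenvalues (?R ** transpose ?R)"
    using eigenvalues_matrix_inv_mult[OF assms(4)] by metis
  have eig_A: "eigenvalues (matrix_inv Ahat ** A) = eigenvalues ?At"
    by (rule eigenvalues_matrix_inv_mult[OF assms(3)])
  show ?thesis
    using shifted_schur_definite[OF At T] assms(5-7)
    unfolding Let_def eig_min_def eig_max_def eig_A eig_S by blast
qed

end
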